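(* Let $H$ be a digraph and let $\widehat{H}\supseteq H$ be a strongly connected digraph. Then there exists $H^*\in GPC(H)$ such that $H^*\subseteq\widehat{H}$.
   Context: $D_1\cup D_2$ denotes the digraph with vertex set $V(D_1)\cup V(D_2)$ and arc set $A(D_1)\cup A(D_2)$. The path completions $PC(H)$ of $H$ are the strongly connected digraphs of the form $H^*=H\cup P_1\cup\dots\cup P_\ell$ where each $P_i$ is a directed path whose two end-points lie in $V(H)$ (the paths need not be vertex-disjoint from each other or from $H$); $\{P_1,\dots,P_\ell\}$ is a witnessing collection of paths. The good path completions $GPC(H)\subseteq PC(H)$ are those $H^*\in PC(H)$ admitting such a representation in which the ordered pairs of end-points of the paths $P_i$ are pairwise distinct (so $\ell\le|V(H)|^2$). *)

theory Defs
  imports Main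
begin

type_synonym 'a digraph = "'a set \<times> ('a \<times> 'a) set"

definition verts :: "'a digraph \<Rightarrow> 'a set" where "verts D = fst D"
definition arcs :: "'a digraph \<Rightarrow> ('a \<times> 'a) set" where "arcs D = snd D"

definition is_digraph :: "'a digraph \<Rightarrow> bool" where
  "is_digraph D \<longleftrightarrow> finite (verts D) \<and> arcs D \<subseteq> verts D \<times> verts D"

definition subdigraph :: "'a digraph \<Rightarrow> 'a digraph \<Rightarrow> bool" where
  "subdigraph D1 D2 \<longleftrightarrow> verts D1 \<subseteq> verts D2 \<and> arcs D1 \<subseteq> arcs D2"

definition dunion :: "'a digraph \<Rightarrow> 'a digraph \<Rightarrow> 'a digraph" where
  "dunion D1 D2 = (verts D1 \<union> verts D2, arcs D1 \<union> arcs D2)"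

definition strongly_connected :: "'a digraph \<Rightarrow> bool" where
  "strongly_connected D \<longleftrightarrow> (\<forall>u\<in>verts D. \<forall>v\<in>verts D. (u, v) \<in> (arcs D)\<^sup>*)"

definition is_dipath :: "'a list \<Rightarrow> bool" where
  "is_dipath p \<longleftrightarrow> p \<noteq> [] \<and> distinct p"

definition path_digraph :: "'a list \<Rightarrow> 'a digraph" where
  "path_digraph p = (set p, set (zip p (tl p)))"

definition with_paths :: "'a digraph \<Rightarrow> 'a list list \<Rightarrow> 'a digraph" where
  "with_paths H ps = (verts H \<union> (\<Union>p\<in>set ps. set p),
                      arcs H \<union> (\<Union>p\<in>set ps. set (zip p (tl p))))"

definition PC :: "'a digraph \<Rightarrow> 'a digraph set" where
  "PC H = {Hs. strongly_connected Hs \<and>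
     (\<exists>ps. (\<forall>p\<in>set ps. is_dipath p \<and> hd p \<in> verts H \<and> last p \<in> verts H)
           \<and> Hs = with_paths H ps)}"

definition GPC :: "'a digraph \<Rightarrow> 'a digraph set" where
  "GPC H = {Hs. strongly_connected Hs \<and>
     (\<exists>ps. (\<forall>p\<in>set ps. is_dipath p \<and> hd p \<in> verts H \<and> last p \<in> verts H)
           \<and> distinct (map (\<lambda>p. (hd p, last p)) ps)
           \<and> Hs = with_paths H ps)}"

end

theory Submission
  imports Defs "HOL-Library.Transitive_Closure_Table"
begin

text \<open>For every ordered pair (u, v) of vertices of H pick one directed path from u to v
  inside the strongly connected supergraph; the pairs of end-points of these paths are
  pairwise distinct by construction. The union of H with these paths is strongly
  connected: vertices of H reach each other along the chosen paths, and every new vertex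
  lies on a path that starts and ends in H.\<close>

lemma rtrancl_path_arcs:
  "rtrancl_path r x xs y \<Longrightarrow> set (zip (x # xs) xs) \<subseteq> {(a, b). r a b} \<and> last (x # xs) = y"
  by (induction rule: rtrancl_path.induct) auto

lemma rtrancl_imp_dipath:
  assumes "(u, v) \<in> R\<^sup>*"
  obtains p where "is_dipath p" "hd p = u" "last p = v" "set (zip p (tl p)) \<subseteq> R"
proof -
  have "(\<lambda>a b. (a, b) \<in> R)\<^sup>*\<^sup>* u v"
    using assms by (simp add: rtrancl_def)
  then obtain xs where "rtrancl_path (\<lambda>a b. (a, b) \<in> R) u xs v"
    by (auto simp: rtranclp_eq_rtrancl_path)
  then obtain xs' where path: "rtrancl_path (\<lambda>a b. (a, b) \<in> R) u xs' v" "distinct (u # xs')"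
    by (rule rtrancl_path_distinct)
  from rtrancl_path_arcs[OF path(1)] path(2) show ?thesis
    by (intro that[of "u # xs'"]) (auto simp: is_dipath_def)
qed

lemma in_path_reachable:
  "x \<in> set p \<Longrightarrow> (hd p, x) \<in> (set (zip p (tl p)))\<^sup>* \<and> (x, last p) \<in> (set (zip p (tl p)))\<^sup>*"
proof (induction p arbitrary: x rule: induct_list012)
  case (3 a b p)
  let ?A = "set (zip (a # b # p) (b # p))"
  have mono: "(set (zip (b # p) p))\<^sup>* \<subseteq> ?A\<^sup>*"
    by (rule rtrancl_mono) auto
  have ab: "(a, b) \<in> ?A"
    by simp
  have b_last: "(b, last (b # p)) \<in> ?A\<^sup>*"
    using "3.IH"(2)[of "last (b # p)"] mono by auto
  consider "x = a" | "x \<in> set (b # p)"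
    using "3.prems" by auto
  then show ?case
  proof cases
    case 1
    with ab b_last show ?thesis
      by (auto intro: converse_rtrancl_into_rtrancl)
  next
    case 2
    with "3.IH"(2)[OF 2] mono ab show ?thesis
      by (auto intro: converse_rtrancl_into_rtrancl)
  qed
qed auto

lemma verts_with_paths [simp]:
  "verts (with_paths H ps) = verts H \<union> (\<Union>p\<in>set ps. set p)"
  by (simp add: with_paths_def verts_def)

lemma arcs_with_paths [simp]:
  "arcs (with_paths H ps) = arcs H \<union> (\<Union>p\<in>set ps. set (zip p (tl p)))"
  by (simp add: with_paths_def arcs_def)

lemma strongly_connected_with_paths:
  assumes ends: "\<And>p. p \<in> set ps \<Longrightarrow> hd p \<in> verts H \<and> last p \<in> verts H"
    and hub: "\<And>u v. u \<in> verts H \<Longrightarrow> v \<in> verts H \<Longrightarrow> (u, v) \<in> (arcs (with_paths H ps))\<^sup>*"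
  shows "strongly_connected (with_paths H ps)"
proof -
  let ?A = "arcs (with_paths H ps)"
  have via_H: "\<exists>u\<in>verts H. (x, u) \<in> ?A\<^sup>* \<and> (u, x) \<in> ?A\<^sup>*"
    if x_in: "x \<in> verts (with_paths H ps)" for x
  proof (cases "x \<in> verts H")
    case False
    then obtain p where p: "p \<in> set ps" "x \<in> set p"
      using x_in by auto
    have "(set (zip p (tl p)))\<^sup>* \<subseteq> ?A\<^sup>*"
      using p(1) by (intro rtrancl_mono) auto
    with in_path_reachable[OF p(2)] have "(hd p, x) \<in> ?A\<^sup>*" "(x, last p) \<in> ?A\<^sup>*"
      by blast+
    moreover have "(last p, hd p) \<in> ?A\<^sup>*"
      using hub ends p(1) by blast
    ultimately show ?thesis
      using ends[OF p(1)] by (meson rtrancl_trans)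
  qed blast
  show ?thesis
    unfolding strongly_connected_def by (meson hub rtrancl_trans via_H)
qed

lemma with_paths_subdigraph:
  assumes "is_digraph G" "subdigraph H G"
    and paths: "\<And>p. p \<in> set ps \<Longrightarrow> hd p \<in> verts G \<and> set (zip p (tl p)) \<subseteq> arcs G"
  shows "subdigraph (with_paths H ps) G"
proof -
  have "x \<in> verts G" if "p \<in> set ps" "x \<in> set p" for p x
  proof -
    have "(hd p, x) \<in> (arcs G)\<^sup>*"
      using in_path_reachable[OF that(2)] rtrancl_mono[OF paths[OF that(1), THEN conjunct2]]
      by blast
    then show ?thesis
      using paths[OF that(1)] \<open>is_digraph G\<close>
      by (cases rule: rtranclE) (auto simp: is_digraph_def)
  qed
  with assms show ?thesis
    by (fastforce simp: subdigraph_def)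
qed

lemma with_chosen_paths_in_GPC:
  assumes "finite (verts H)"
    and P: "\<And>u v. u \<in> verts H \<Longrightarrow> v \<in> verts H \<Longrightarrow>
      is_dipath (P u v) \<and> hd (P u v) = u \<and> last (P u v) = v"
  obtains ps where "with_paths H ps \<in> GPC H" "set ps = case_prod P ` (verts H \<times> verts H)"
proof -
  obtain xs where xs: "set xs = verts H" "distinct xs"
    using \<open>finite (verts H)\<close> finite_distinct_list by blast
  define ps where "ps = map (case_prod P) (List.product xs xs)"
  have set_ps: "set ps = case_prod P ` (verts H \<times> verts H)"
    by (simp add: ps_def xs(1))
  have ends: "map (\<lambda>p. (hd p, last p)) ps = List.product xs xs"
    unfolding ps_def map_map by (rule map_idI) (use P xs(1) in auto)
  have "(u, v) \<in> (arcs (with_paths H ps))\<^sup>*" if "u \<in> verts H" "v \<in> verts H" for u v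
  proof -
    have "(set (zip (P u v) (tl (P u v))))\<^sup>* \<subseteq> (arcs (with_paths H ps))\<^sup>*"
      using set_ps that by (intro rtrancl_mono) auto
    moreover have "last (P u v) \<in> set (P u v)"
      using P[OF that] last_in_set unfolding is_dipath_def by metis
    ultimately show ?thesis
      using in_path_reachable[of "last (P u v)" "P u v"] P[OF that] by auto
  qed
  then have "strongly_connected (with_paths H ps)"
    using P set_ps by (intro strongly_connected_with_paths) auto
  moreover have "distinct (map (\<lambda>p. (hd p, last p)) ps)"
    unfolding ends using xs(2) by (simp add: distinct_product)
  moreover have "\<forall>p\<in>set ps. is_dipath p \<and> hd p \<in> verts H \<and> last p \<in> verts H"
    using P set_ps by auto
  ultimately show ?thesis
    using that set_ps unfolding GPC_def by blast
qed

theorem lemma19: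
  fixes H Hhat :: "'a digraph"
  assumes "is_digraph H" and "is_digraph Hhat"
    and "subdigraph H Hhat"
    and "strongly_connected Hhat"
  shows "\<exists>Hs\<in>GPC H. subdigraph Hs Hhat"
proof -
  have "\<exists>p. is_dipath p \<and> hd p = u \<and> last p = v \<and> set (zip p (tl p)) \<subseteq> arcs Hhat"
    if "u \<in> verts H" "v \<in> verts H" for u v
  proof -
    have "(u, v) \<in> (arcs Hhat)\<^sup>*"
      using that assms(3,4) by (auto simp: subdigraph_def strongly_connected_def)
    then show ?thesis
      by (rule rtrancl_imp_dipath) blast
  qed
  then obtain P where P: "\<And>u v. u \<in> verts H \<Longrightarrow> v \<in> verts H \<Longrightarrow>
      is_dipath (P u v) \<and> hd (P u v) = u \<and> last (P u v) = v \<and>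
      set (zip (P u v) (tl (P u v))) \<subseteq> arcs Hhat"
    by metis
  obtain ps where ps: "with_paths H ps \<in> GPC H" "set ps = case_prod P ` (verts H \<times> verts H)"
    using with_chosen_paths_in_GPC[of H P] P assms(1) unfolding is_digraph_def by blast
  have "subdigraph (with_paths H ps) Hhat"
    using assms(2,3) P ps(2) by (intro with_paths_subdigraph) (auto simp: subdigraph_def)
  with ps(1) show ?thesis
    by blast
qed

end
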